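(* Let $(\mathcal{U},f,g,\preccurlyeq)$ be a fault-tolerance partially ordered $(m,n)$-semiring as described in the context, and let $x_1,\ldots,x_m,y_1,\ldots,y_n\in\mathcal{U}$ be disjoint components. Then (i) $f(x_1^m)\preccurlyeq f(f(x_1^m),f(x_1^m),\ldots,f(x_1^m))$ (with $m$ copies of $f(x_1^m)$); (ii) $g(g(y_1^n),g(y_1^n),\ldots,g(y_1^n))\preccurlyeq g(y_1^n)$ (with $n$ copies of $g(y_1^n)$).
   Context: Notation: $x_i^j$ denotes $x_i,\ldots,x_j$. $(\mathcal{U},f,g)$ is an $(m,n)$-semiring: $f$ is an associative $m$-ary and $g$ an associative $n$-ary operation on $\mathcal{U}$ (associativity of a $k$-ary $h$: $h(x_1^{i-1},h(x_i^{k+i-1}),x_{k+i}^{2k-1})=h(x_1^{j-1},h(x_j^{k+j-1}),x_{k+j}^{2k-1})$ for $1\le i\le j\le k$), and $g$ distributes over $f$ in every position. $\mathcal{U}$ is interpreted as a set of systems; $f(x_1^m)$ is the system that fails when any $x_i$ fails, $g(y_1^n)$ the system that fails only when all $y_j$ fail; elements are assumed to be disjoint components (failing independently), which imposes no further algebraic condition. $\mathbf{0}\in\mathcal{U}$ (the always-up system) is an $f$-identity ($f(\mathbf{0},\ldots,x,\ldots,\mathbf{0})=x$ in every position) and $\mathbf{1}$ (the always-down system) is a $g$-identity; moreover $g(y_1^{j-1},\mathbf{0},y_{j+1}^n)=\mathbf{0}$ and $f(x_1^{i-1},\mathbf{1},x_{i+1}^m)=\mathbf{1}$ for all arguments and positions.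 $\preccurlyeq$ is a partial order on $\mathcal{U}$ ("fault-tolerance partial order") such that $(\mathcal{U},f,g,\preccurlyeq)$ is a partially ordered $(m,n)$-semiring: $a\preccurlyeq b$ implies $f(x_1^{i-1},a,x_{i+1}^m)\preccurlyeq f(x_1^{i-1},b,x_{i+1}^m)$ and $g(y_1^{j-1},a,y_{j+1}^n)\preccurlyeq g(y_1^{j-1},b,y_{j+1}^n)$ for all arguments and all positions; and $\mathbf{0}\preccurlyeq a\preccurlyeq\mathbf{1}$ for all $a\in\mathcal{U}$. *)

theory Defs
  imports Main
begin

text \<open>A k-ary operation on the type 'a is modelled as a function on lists,
  only ever applied to lists of length k.\<close>

definition nary_assoc :: "nat \<Rightarrow> ('a list \<Rightarrow> 'a) \<Rightarrow> bool" where
  "nary_assoc k h \<longleftrightarrow>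
     (\<forall>xs i j. length xs = 2 * k - 1 \<and> i < k \<and> j < k \<longrightarrow>
        h (take i xs @ [h (take k (drop i xs))] @ drop (i + k) xs)
      = h (take j xs @ [h (take k (drop j xs))] @ drop (j + k) xs))"

definition distributes :: "nat \<Rightarrow> nat \<Rightarrow> ('a list \<Rightarrow> 'a) \<Rightarrow> ('a list \<Rightarrow> 'a) \<Rightarrow> bool" where
  "distributes m n f g \<longleftrightarrow>
     (\<forall>xs ys j. length xs = m \<and> length ys = n \<and> j < n \<longrightarrow>
        g (ys[j := f xs]) = f (map (\<lambda>x. g (ys[j := x])) xs))"

definition mn_semiring :: "nat \<Rightarrow> nat \<Rightarrow> ('a list \<Rightarrow> 'a) \<Rightarrow> ('a list \<Rightarrow> 'a) \<Rightarrow> bool" where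
  "mn_semiring m n f g \<longleftrightarrow> 2 \<le> m \<and> 2 \<le> n \<and> nary_assoc m f \<and> nary_assoc n g \<and> distributes m n f g"

text \<open>Fault-tolerance partially ordered (m,n)-semiring with the always-up system
  zero (identity of f, absorbing for g) and the always-down system one
  (identity of g, absorbing for f).\<close>
definition ft_po_mn_semiring ::
  "nat \<Rightarrow> nat \<Rightarrow> ('a list \<Rightarrow> 'a) \<Rightarrow> ('a list \<Rightarrow> 'a) \<Rightarrow> ('a \<Rightarrow> 'a \<Rightarrow> bool) \<Rightarrow> 'a \<Rightarrow> 'a \<Rightarrow> bool" where
  "ft_po_mn_semiring m n f g le zero one \<longleftrightarrow>
     mn_semiring m n f g
   \<and> (\<forall>x i. i < m \<longrightarrow> f ((replicate m zero)[i := x]) = x)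
   \<and> (\<forall>y j. j < n \<longrightarrow> g ((replicate n one)[j := y]) = y)
   \<and> (\<forall>ys j. length ys = n \<and> j < n \<longrightarrow> g (ys[j := zero]) = zero)
   \<and> (\<forall>xs i. length xs = m \<and> i < m \<longrightarrow> f (xs[i := one]) = one)
   \<and> reflp le \<and> transp le \<and> antisymp le
   \<and> (\<forall>a b xs i. le a b \<and> length xs = m \<and> i < m \<longrightarrow> le (f (xs[i := a])) (f (xs[i := b])))
   \<and> (\<forall>a b ys j. le a b \<and> length ys = n \<and> j < n \<longrightarrow> le (g (ys[j := a])) (g (ys[j := b])))
   \<and> (\<forall>a. le zero a \<and> le a one)"

end

theory Submission
  imports Defs
begin

text \<open>Let \<open>a = f(x\<^sub>1,\<dots>,x\<^sub>m)\<close>. Since \<open>\<zero>\<close> is an identity of \<open>f\<close>, \<open>a = f(a,\<zero>,\<dots>,\<zero>)\<close>, and since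
  \<open>\<zero> \<preccurlyeq> a\<close>, raising the arguments one at a time by monotonicity gives
  \<open>f(a,\<zero>,\<dots>,\<zero>) \<preccurlyeq> f(a,\<dots>,a)\<close>. Dually \<open>g(b,\<dots>,b) \<preccurlyeq> g(b,\<one>,\<dots>,\<one>) = b\<close> for
  \<open>b = g(y\<^sub>1,\<dots>,y\<^sub>n)\<close>, using \<open>b \<preccurlyeq> \<one>\<close>.\<close>

definition mono_in_each_arg :: "nat \<Rightarrow> ('a \<Rightarrow> 'a \<Rightarrow> bool) \<Rightarrow> ('a list \<Rightarrow> 'a) \<Rightarrow> bool" where
  "mono_in_each_arg k R h \<longleftrightarrow>
     (\<forall>a b xs i. R a b \<and> length xs = k \<and> i < k \<longrightarrow> R (h (xs[i := a])) (h (xs[i := b])))"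

lemma take_drop_update_Suc:
  assumes "i < length xs" and "length ys = length xs"
  shows "take (Suc i) ys @ drop (Suc i) xs = (take i ys @ drop i xs)[i := ys ! i]"
proof -
  have "drop i xs = xs ! i # drop (Suc i) xs" using assms(1) by (simp add: Cons_nth_drop_Suc)
  then show ?thesis using assms by (simp add: list_update_append take_Suc_conv_app_nth)
qed

lemma mono_in_each_arg_list_all2:
  assumes mono: "mono_in_each_arg (length xs) R h" and "reflp R" and "transp R"
    and le: "list_all2 R xs ys"
  shows "R (h xs) (h ys)"
proof -
  have len: "length ys = length xs" using le by (simp add: list_all2_lengthD)
  have "R (h xs) (h (take i ys @ drop i xs))" if "i \<le> length xs" for i
    using that
  proof (induction i)
    case 0
    then show ?case using \<open>reflp R\<close> by (simp add: reflpD)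
  next
    case (Suc i)
    let ?zs = "take i ys @ drop i xs"
    have i: "i < length xs" using Suc.prems by simp
    have "?zs ! i = xs ! i" using i len by (simp add: nth_append)
    then have "?zs[i := xs ! i] = ?zs" by (metis list_update_id)
    moreover have "R (xs ! i) (ys ! i)" using le i by (simp add: list_all2_nthD)
    moreover have "length ?zs = length xs" using i len by simp
    ultimately have "R (h ?zs) (h (?zs[i := ys ! i]))"
      using mono i unfolding mono_in_each_arg_def by metis
    then have "R (h ?zs) (h (take (Suc i) ys @ drop (Suc i) xs))"
      using take_drop_update_Suc[OF i len] by simp
    with Suc show ?case using \<open>transp R\<close> by (meson Suc_leD transpD)
  qed
  from this[of "length xs"] show ?thesis using len by simp
qed

lemma list_all2_replicate_update_0_left:
  "0 < k \<Longrightarrow> R a a \<Longrightarrow> R z a \<Longrightarrow> list_all2 R ((replicate k z)[0 := a]) (replicate k a)"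
  by (auto simp: list_all2_conv_all_nth nth_list_update)

lemma list_all2_replicate_update_0_right:
  "0 < k \<Longrightarrow> R a a \<Longrightarrow> R a z \<Longrightarrow> list_all2 R (replicate k a) ((replicate k z)[0 := a])"
  by (auto simp: list_all2_conv_all_nth nth_list_update)

theorem theorem11:
  fixes f g :: "'a list \<Rightarrow> 'a" and le :: "'a \<Rightarrow> 'a \<Rightarrow> bool" and zero one :: 'a
    and m n :: nat and xs ys :: "'a list"
  assumes "ft_po_mn_semiring m n f g le zero one"
    and "length xs = m" and "length ys = n"
  shows "le (f xs) (f (replicate m (f xs))) \<and> le (g (replicate n (g ys))) (g ys)"
proof
  note A = assms(1)[unfolded ft_po_mn_semiring_def mn_semiring_def]
  have m: "0 < m" and n: "0 < n" and "reflp le" "transp le" using A by auto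
  have mono_f: "mono_in_each_arg m le f" and mono_g: "mono_in_each_arg n le g"
    using A unfolding mono_in_each_arg_def by auto
  let ?a = "f xs" and ?b = "g ys"
  have "f ((replicate m zero)[0 := ?a]) = ?a" "g ((replicate n one)[0 := ?b]) = ?b"
    using A m n by auto
  moreover have "list_all2 le ((replicate m zero)[0 := ?a]) (replicate m ?a)"
    and "list_all2 le (replicate n ?b) ((replicate n one)[0 := ?b])"
    using A m n \<open>reflp le\<close>
    by (auto intro: list_all2_replicate_update_0_left list_all2_replicate_update_0_right
        simp: reflpD)
  ultimately show "le ?a (f (replicate m ?a))" "le (g (replicate n ?b)) ?b"
    using mono_in_each_arg_list_all2 mono_f mono_g \<open>reflp le\<close> \<open>transp le\<close>
    by (metis length_list_update length_replicate)+
qed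

end
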